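(* Let $X_\bullet$ be a right $k[\square_{\mathrm{inj}}]$-module. Then \[H_n(\tau(v^\ast X_\bullet))\cong H^\square_{n+1}(X_\bullet)\ (n\ge0),\qquad H^a_{-1}(v^\ast X_\bullet)\cong H^\square_0(X_\bullet).\] Consequently, a morphism $f$ of right $k[\square_{\mathrm{inj}}]$-modules lies in $W_{\square_{\mathrm{inj}}}$ if and only if $v^\ast f\in W_{\Delta_{a,\mathrm{inj}}}$, and $v^\ast$ induces a functor of Gabriel–Zisman localizations \[\mathrm{rmod}(k[\square_{\mathrm{inj}}])[W_{\square_{\mathrm{inj}}}^{-1}]\to\mathrm{rmod}(k[\Delta_{a,\mathrm{inj}}])[W_{\Delta_{a,\mathrm{inj}}}^{-1}]\simeq\mathbf{Ch}_{\ge-1}(k)[\text{quasi-isos}^{-1}].\]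
   Context: $k$ is a field; $k[\mathcal C]$ is the $k$-linearization of a small category; right modules over a $k$-linear category are $k$-linear functors from its opposite to $\mathrm{Vect}_k$; for a right module $X$ and $f\colon x\to y$, $X(f)\colon X(y)\to X(x)$. $\Delta_{a,\mathrm{inj}}$: objects $[n]=\{0<\dots<n\}$, $n\ge0$, and $[-1]=\varnothing$, injective order-preserving maps; $\delta^i\colon[n-1]\to[n]$ omits $i$. $\square_{\mathrm{inj}}$: objects $\square_n=\{0,1\}^n$, $n\ge0$, morphisms generated by cofaces $\delta_i^\varepsilon\colon\square_{n-1}\to\square_n$ ($\varepsilon\in\{0,1\}$, $1\le i\le n$) inserting $\varepsilon$ as $i$-th coordinate; write $X_n=X(\square_n)$. The cubical sign embedding $v\colon k[\Delta_{a,\mathrm{inj}}]\to k[\square_{\mathrm{inj}}]$ is the $k$-linear functor $[n]\mapsto\square_{n+1}$, $\delta^i\mapsto\delta^1_{i+1}-\delta^0_{i+1}$; $v^\ast$ is restriction. $H^\square_n(X)$ is the homology of the chain complex $\cdots\to X_1\to X_0$ with differential $\partial_n=X(\sum_{i=1}^n(-1)^{i-1}(\delta_i^1-\delta_i^0))$; $W_{\square_{\mathrm{inj}}}$ is the class of morphisms inducing isomorphisms on $H^\square_n$ for all $n\ge0$. For a right $k[\Delta_{a,\mathrm{inj}}]$-module $Y$, $C^a_\ast(Y)$ is $\cdots\to Y_0\xrightarrow{\partial^a_0}Y_{-1}$ with $\partial^a_n=Y(\sum_{i=0}^n(-1)^i\delta^i)$, $H^a_{-1}(Y)=\operatorname{coker}\partial^a_0$,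 and the good truncation $\tau(Y)$ has $\tau(Y)_n=Y_n$ for $n\ge1$, $\tau(Y)_0=\ker\partial^a_0$; $W_{\Delta_{a,\mathrm{inj}}}$ is the class of morphisms $g$ with $\tau(g)$ a quasi-isomorphism and $H^a_{-1}(g)$ an isomorphism. The final equivalence with $\mathbf{Ch}_{\ge-1}(k)$ is induced by $C^a_\ast$. $\mathcal C[W^{-1}]$ is Gabriel–Zisman localization. *)

theory Defs
  imports Complex_Main
begin

definition cycles :: "(int \<Rightarrow> 'v set) \<Rightarrow> (int \<Rightarrow> 'v \<Rightarrow> 'v::zero) \<Rightarrow> int \<Rightarrow> 'v set" where
  "cycles C D n = {x \<in> C n. D n x = 0}"

definition boundaries :: "(int \<Rightarrow> 'v set) \<Rightarrow> (int \<Rightarrow> 'v \<Rightarrow> 'v) \<Rightarrow> int \<Rightarrow> 'v set" where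
  "boundaries C D n = D (n + 1) ` C (n + 1)"

text \<open>Elements of the quotient Z/B, as cosets.\<close>
definition cosets :: "'v::plus set \<Rightarrow> 'v set \<Rightarrow> 'v set set" where
  "cosets Z B = (\<lambda>z. (+) z ` B) ` Z"

definition induced :: "('v \<Rightarrow> 'w::plus) \<Rightarrow> 'w set \<Rightarrow> 'v set \<Rightarrow> 'w set" where
  "induced g B2 c = (\<Union>x\<in>c. (+) (g x) ` B2)"

definition quotient_iso ::
  "('k \<Rightarrow> 'v \<Rightarrow> 'v::ab_group_add) \<Rightarrow> 'v set \<Rightarrow> 'v set \<Rightarrow>
   ('k \<Rightarrow> 'w \<Rightarrow> 'w::ab_group_add) \<Rightarrow> 'w set \<Rightarrow> 'w set \<Rightarrow> bool" where
  "quotient_iso sc1 Z1 B1 sc2 Z2 B2 \<longleftrightarrow>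
     (\<exists>g. (\<forall>x\<in>Z1. g x \<in> Z2) \<and> (\<forall>x\<in>Z1. \<forall>y\<in>Z1. g (x + y) = g x + g y)
        \<and> (\<forall>c. \<forall>x\<in>Z1. g (sc1 c x) = sc2 c (g x)) \<and> (\<forall>x\<in>B1. g x \<in> B2)
        \<and> bij_betw (induced g B2) (cosets Z1 B1) (cosets Z2 B2))"

definition homology_iso ::
  "('k \<Rightarrow> 'v \<Rightarrow> 'v::ab_group_add) \<Rightarrow> (int \<Rightarrow> 'v set) \<Rightarrow> (int \<Rightarrow> 'v \<Rightarrow> 'v) \<Rightarrow> int \<Rightarrow>
   ('k \<Rightarrow> 'w \<Rightarrow> 'w::ab_group_add) \<Rightarrow> (int \<Rightarrow> 'w set) \<Rightarrow> (int \<Rightarrow> 'w \<Rightarrow> 'w) \<Rightarrow> int \<Rightarrow> bool" where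
  "homology_iso sc1 C1 D1 n1 sc2 C2 D2 n2 \<longleftrightarrow>
     quotient_iso sc1 (cycles C1 D1 n1) (boundaries C1 D1 n1) sc2 (cycles C2 D2 n2) (boundaries C2 D2 n2)"

definition induces_homology_iso ::
  "('v \<Rightarrow> 'w) \<Rightarrow> (int \<Rightarrow> 'v set) \<Rightarrow> (int \<Rightarrow> 'v \<Rightarrow> 'v::ab_group_add) \<Rightarrow>
   (int \<Rightarrow> 'w set) \<Rightarrow> (int \<Rightarrow> 'w \<Rightarrow> 'w::ab_group_add) \<Rightarrow> int \<Rightarrow> bool" where
  "induces_homology_iso g C1 D1 C2 D2 n \<longleftrightarrow>
     bij_betw (induced g (boundaries C2 D2 n))
       (cosets (cycles C1 D1 n) (boundaries C1 D1 n)) (cosets (cycles C2 D2 n) (boundaries C2 D2 n))"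

text \<open>A right k[\<box>_inj]-module X is encoded by subspaces V n = X_n of an ambient k-vector space
  (scalar multiplication sc) together with the face maps d n i e = X(\<delta>_i^e) : X_n \<rightarrow> X_{n-1}
  (1 \<le> i \<le> n, e = True meaning \<epsilon> = 1), which are k-linear and satisfy the duals of the cubical
  identities \<delta>_j^\<eta> \<delta>_i^\<epsilon> = \<delta>_i^\<epsilon> \<delta>_{j-1}^\<eta> (i < j), which present \<box>_inj.\<close>
definition cube_module ::
  "('k::field \<Rightarrow> 'v::ab_group_add \<Rightarrow> 'v) \<Rightarrow> (nat \<Rightarrow> 'v set) \<Rightarrow> (nat \<Rightarrow> nat \<Rightarrow> bool \<Rightarrow> 'v \<Rightarrow> 'v) \<Rightarrow> bool" where
  "cube_module sc V d \<longleftrightarrow>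
     vector_space sc \<and> (\<forall>n. module.subspace sc (V n)) \<and>
     (\<forall>n i e. 1 \<le> i \<and> i \<le> Suc n \<longrightarrow>
        (\<forall>x\<in>V (Suc n). d (Suc n) i e x \<in> V n) \<and>
        (\<forall>x\<in>V (Suc n). \<forall>y\<in>V (Suc n). d (Suc n) i e (x + y) = d (Suc n) i e x + d (Suc n) i e y) \<and>
        (\<forall>c. \<forall>x\<in>V (Suc n). d (Suc n) i e (sc c x) = sc c (d (Suc n) i e x))) \<and>
     (\<forall>n i j e h. 1 \<le> i \<and> i < j \<and> j \<le> n + 2 \<longrightarrow>
        (\<forall>x\<in>V (n + 2). d (n + 1) i e (d (n + 2) j h x) = d (n + 1) (j - 1) h (d (n + 2) i e x)))"

definition cube_hom ::
  "('k::field \<Rightarrow> 'v::ab_group_add \<Rightarrow> 'v) \<Rightarrow> (nat \<Rightarrow> 'v set) \<Rightarrow> (nat \<Rightarrow> nat \<Rightarrow> bool \<Rightarrow> 'v \<Rightarrow> 'v) \<Rightarrow>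
   ('k \<Rightarrow> 'w::ab_group_add \<Rightarrow> 'w) \<Rightarrow> (nat \<Rightarrow> 'w set) \<Rightarrow> (nat \<Rightarrow> nat \<Rightarrow> bool \<Rightarrow> 'w \<Rightarrow> 'w) \<Rightarrow>
   (nat \<Rightarrow> 'v \<Rightarrow> 'w) \<Rightarrow> bool" where
  "cube_hom sc V d sc' V' d' f \<longleftrightarrow>
     (\<forall>n. (\<forall>x\<in>V n. f n x \<in> V' n) \<and> (\<forall>x\<in>V n. \<forall>y\<in>V n. f n (x + y) = f n x + f n y) \<and>
          (\<forall>c. \<forall>x\<in>V n. f n (sc c x) = sc' c (f n x))) \<and>
     (\<forall>n i e. 1 \<le> i \<and> i \<le> Suc n \<longrightarrow>
        (\<forall>x\<in>V (Suc n). f n (d (Suc n) i e x) = d' (Suc n) i e (f (Suc n) x)))"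

definition cube_bd :: "('k::field \<Rightarrow> 'v::ab_group_add \<Rightarrow> 'v) \<Rightarrow> (nat \<Rightarrow> nat \<Rightarrow> bool \<Rightarrow> 'v \<Rightarrow> 'v) \<Rightarrow> nat \<Rightarrow> 'v \<Rightarrow> 'v" where
  "cube_bd sc d n x = (\<Sum>i=1..n. sc ((-1) ^ (i - 1)) (d n i True x - d n i False x))"

definition cube_C :: "(nat \<Rightarrow> 'v::zero set) \<Rightarrow> int \<Rightarrow> 'v set" where
  "cube_C V n = (if n \<ge> 0 then V (nat n) else {0})"

definition cube_D :: "('k::field \<Rightarrow> 'v::ab_group_add \<Rightarrow> 'v) \<Rightarrow> (nat \<Rightarrow> nat \<Rightarrow> bool \<Rightarrow> 'v \<Rightarrow> 'v) \<Rightarrow> int \<Rightarrow> 'v \<Rightarrow> 'v" where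
  "cube_D sc d n = (if n \<ge> 1 then cube_bd sc d (nat n) else (\<lambda>_. 0))"

definition W_cube ::
  "('k::field \<Rightarrow> 'v::ab_group_add \<Rightarrow> 'v) \<Rightarrow> (nat \<Rightarrow> 'v set) \<Rightarrow> (nat \<Rightarrow> nat \<Rightarrow> bool \<Rightarrow> 'v \<Rightarrow> 'v) \<Rightarrow>
   ('k \<Rightarrow> 'w::ab_group_add \<Rightarrow> 'w) \<Rightarrow> (nat \<Rightarrow> 'w set) \<Rightarrow> (nat \<Rightarrow> nat \<Rightarrow> bool \<Rightarrow> 'w \<Rightarrow> 'w) \<Rightarrow>
   (nat \<Rightarrow> 'v \<Rightarrow> 'w) \<Rightarrow> bool" where
  "W_cube sc V d sc' V' d' f \<longleftrightarrow>
     (\<forall>n::int. n \<ge> 0 \<longrightarrow>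
        induces_homology_iso (f (nat n)) (cube_C V) (cube_D sc d) (cube_C V') (cube_D sc' d') n)"

text \<open>A right k[\<Delta>_{a,inj}]-module Y: subspaces Y n (n \<ge> -1) of an ambient k-vector space and
  face maps d n i = Y(\<delta>^i) : Y_n \<rightarrow> Y_{n-1} (n \<ge> 0, 0 \<le> i \<le> n), k-linear, satisfying
  the duals of \<delta>^j \<delta>^i = \<delta>^i \<delta>^{j-1} (i < j).\<close>
definition ss_module ::
  "('k::field \<Rightarrow> 'v::ab_group_add \<Rightarrow> 'v) \<Rightarrow> (int \<Rightarrow> 'v set) \<Rightarrow> (int \<Rightarrow> nat \<Rightarrow> 'v \<Rightarrow> 'v) \<Rightarrow> bool" where
  "ss_module sc Y d \<longleftrightarrow>
     vector_space sc \<and> (\<forall>n \<ge> -1. module.subspace sc (Y n)) \<and>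
     (\<forall>n i. n \<ge> 0 \<and> int i \<le> n \<longrightarrow>
        (\<forall>x\<in>Y n. d n i x \<in> Y (n - 1)) \<and>
        (\<forall>x\<in>Y n. \<forall>y\<in>Y n. d n i (x + y) = d n i x + d n i y) \<and>
        (\<forall>c. \<forall>x\<in>Y n. d n i (sc c x) = sc c (d n i x))) \<and>
     (\<forall>n i j. n \<ge> 0 \<and> i < j \<and> int j \<le> n + 1 \<longrightarrow>
        (\<forall>x\<in>Y (n + 1). d n i (d (n + 1) j x) = d n (j - 1) (d (n + 1) i x)))"

definition ss_bd :: "('k::field \<Rightarrow> 'v::ab_group_add \<Rightarrow> 'v) \<Rightarrow> (int \<Rightarrow> nat \<Rightarrow> 'v \<Rightarrow> 'v) \<Rightarrow> int \<Rightarrow> 'v \<Rightarrow> 'v" where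
  "ss_bd sc d n x = (\<Sum>i=0..nat n. sc ((-1) ^ i) (d n i x))"

definition ca_C :: "(int \<Rightarrow> 'v::zero set) \<Rightarrow> int \<Rightarrow> 'v set" where
  "ca_C Y n = (if n \<ge> -1 then Y n else {0})"

definition ca_D :: "('k::field \<Rightarrow> 'v::ab_group_add \<Rightarrow> 'v) \<Rightarrow> (int \<Rightarrow> nat \<Rightarrow> 'v \<Rightarrow> 'v) \<Rightarrow> int \<Rightarrow> 'v \<Rightarrow> 'v" where
  "ca_D sc d n = (if n \<ge> 0 then ss_bd sc d n else (\<lambda>_. 0))"

definition tau_C :: "('k::field \<Rightarrow> 'v::ab_group_add \<Rightarrow> 'v) \<Rightarrow> (int \<Rightarrow> 'v set) \<Rightarrow> (int \<Rightarrow> nat \<Rightarrow> 'v \<Rightarrow> 'v) \<Rightarrow> int \<Rightarrow> 'v set" where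
  "tau_C sc Y d n = (if n = 0 then {x \<in> Y 0. ss_bd sc d 0 x = 0} else if n \<ge> 1 then Y n else {0})"

definition tau_D :: "('k::field \<Rightarrow> 'v::ab_group_add \<Rightarrow> 'v) \<Rightarrow> (int \<Rightarrow> nat \<Rightarrow> 'v \<Rightarrow> 'v) \<Rightarrow> int \<Rightarrow> 'v \<Rightarrow> 'v" where
  "tau_D sc d n = (if n \<ge> 1 then ss_bd sc d n else (\<lambda>_. 0))"

definition W_Delta ::
  "('k::field \<Rightarrow> 'v::ab_group_add \<Rightarrow> 'v) \<Rightarrow> (int \<Rightarrow> 'v set) \<Rightarrow> (int \<Rightarrow> nat \<Rightarrow> 'v \<Rightarrow> 'v) \<Rightarrow>
   ('k \<Rightarrow> 'w::ab_group_add \<Rightarrow> 'w) \<Rightarrow> (int \<Rightarrow> 'w set) \<Rightarrow> (int \<Rightarrow> nat \<Rightarrow> 'w \<Rightarrow> 'w) \<Rightarrow>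
   (int \<Rightarrow> 'v \<Rightarrow> 'w) \<Rightarrow> bool" where
  "W_Delta sc Y d sc' Y' d' g \<longleftrightarrow>
     (\<forall>n::int. n \<ge> 0 \<longrightarrow>
        induces_homology_iso (g n) (tau_C sc Y d) (tau_D sc d) (tau_C sc' Y' d') (tau_D sc' d') n) \<and>
     induces_homology_iso (g (-1)) (ca_C Y) (ca_D sc d) (ca_C Y') (ca_D sc' d') (-1)"

text \<open>v[n] = \<box>_{n+1}, v(\<delta>^i) = \<delta>^1_{i+1} - \<delta>^0_{i+1}; hence (v^*X)_n = X_{n+1} and
  (v^*X)(\<delta>^i) = X(\<delta>^1_{i+1}) - X(\<delta>^0_{i+1}).\<close>
definition vstar_sp :: "(nat \<Rightarrow> 'v set) \<Rightarrow> int \<Rightarrow> 'v set" where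
  "vstar_sp V n = V (nat (n + 1))"

definition vstar_face :: "(nat \<Rightarrow> nat \<Rightarrow> bool \<Rightarrow> 'v \<Rightarrow> 'v::minus) \<Rightarrow> int \<Rightarrow> nat \<Rightarrow> 'v \<Rightarrow> 'v" where
  "vstar_face d n i x = d (nat (n + 1)) (Suc i) True x - d (nat (n + 1)) (Suc i) False x"

definition vstar_mor :: "(nat \<Rightarrow> 'v \<Rightarrow> 'w) \<Rightarrow> int \<Rightarrow> 'v \<Rightarrow> 'w" where
  "vstar_mor f n = f (nat (n + 1))"

end

theory Submission
  imports Defs
begin

text \<open>Since \<open>v\<close> sends \<open>\<delta>\<^sup>i\<close> to \<open>\<delta>\<^sup>1\<^sub>i\<^sub>+\<^sub>1 - \<delta>\<^sup>0\<^sub>i\<^sub>+\<^sub>1\<close>, the alternating face sum of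
  \<open>v\<^sup>*X\<close> in degree \<open>n\<close> is, after shifting the summation index by one, exactly the cubical
  differential of \<open>X\<close> in degree \<open>n + 1\<close>. So \<open>\<tau>(v\<^sup>*X)\<close> is the cubical complex of \<open>X\<close>
  shifted down by one, and \<open>C\<^sup>a(v\<^sup>*X)\<close> ends in the same map \<open>X\<^sub>1 \<rightarrow> X\<^sub>0\<close>: cycles and
  boundaries coincide on the nose, the homology isomorphisms are identities, and both
  localizing classes are tested on the same homology groups.\<close>

lemma ss_bd_vstar_face:
  assumes "n \<ge> 0"
  shows "ss_bd sc (vstar_face d) n = cube_bd sc d (nat (n + 1))"
proof
  fix x
  have "nat (n + 1) = Suc (nat n)" using assms by simp
  then show "ss_bd sc (vstar_face d) n x = cube_bd sc d (nat (n + 1)) x"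
    unfolding ss_bd_def cube_bd_def vstar_face_def
    using sum.shift_bounds_cl_Suc_ivl[of "\<lambda>i. sc ((-1) ^ (i - 1))
          (d (Suc (nat n)) i True x - d (Suc (nat n)) i False x)" 0 "nat n"] by simp
qed

lemma cycles_tau_vstar:
  assumes "n \<ge> 0"
  shows "cycles (tau_C sc (vstar_sp V) (vstar_face d)) (tau_D sc (vstar_face d)) n
       = cycles (cube_C V) (cube_D sc d) (n + 1)"
  using assms ss_bd_vstar_face[of n sc d] ss_bd_vstar_face[of 0 sc d]
  unfolding cycles_def tau_C_def tau_D_def cube_C_def cube_D_def vstar_sp_def
  by (cases "n = 0") auto

lemma boundaries_tau_vstar:
  assumes "n \<ge> 0"
  shows "boundaries (tau_C sc (vstar_sp V) (vstar_face d)) (tau_D sc (vstar_face d)) n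
       = boundaries (cube_C V) (cube_D sc d) (n + 1)"
  using assms ss_bd_vstar_face[of "n + 1" sc d]
  unfolding boundaries_def tau_C_def tau_D_def cube_C_def cube_D_def vstar_sp_def
  by auto

lemma cycles_ca_vstar:
  "cycles (ca_C (vstar_sp V)) (ca_D sc (vstar_face d)) (-1) = cycles (cube_C V) (cube_D sc d) 0"
  unfolding cycles_def ca_C_def ca_D_def cube_C_def cube_D_def vstar_sp_def by auto

lemma boundaries_ca_vstar:
  "boundaries (ca_C (vstar_sp V)) (ca_D sc (vstar_face d)) (-1)
     = boundaries (cube_C V) (cube_D sc d) 0"
  using ss_bd_vstar_face[of 0 sc d]
  unfolding boundaries_def ca_C_def ca_D_def cube_C_def cube_D_def vstar_sp_def
  by auto

lemma
  assumes "cube_module sc V d"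
  shows cube_module_vector_space: "vector_space sc"
    and cube_module_subspace: "module.subspace sc (V n)"
  using assms unfolding cube_module_def by simp_all

lemma cube_bd_add:
  assumes X: "cube_module sc V d" and "m \<ge> 1" and x: "x \<in> V m" and y: "y \<in> V m"
  shows "cube_bd sc d m (x + y) = cube_bd sc d m x + cube_bd sc d m y"
proof -
  interpret vector_space sc by (rule cube_module_vector_space[OF X])
  obtain k where k: "m = Suc k" using \<open>m \<ge> 1\<close> by (cases m) auto
  have face_diff_add: "d m i True (x + y) - d m i False (x + y)
      = (d m i True x - d m i False x) + (d m i True y - d m i False y)" if "i \<in> {1..m}" for i
    using X that x y unfolding cube_module_def k by (simp add: algebra_simps)
  have "cube_bd sc d m (x + y) = (\<Sum>i=1..m. sc ((-1) ^ (i - 1)) (d m i True x - d m i False x)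
        + sc ((-1) ^ (i - 1)) (d m i True y - d m i False y))"
    unfolding cube_bd_def by (rule sum.cong) (simp_all add: face_diff_add scale_right_distrib)
  then show ?thesis unfolding cube_bd_def by (simp add: sum.distrib)
qed

lemma cube_boundaries_eq_image:
  assumes "n \<ge> 0"
  shows "boundaries (cube_C V) (cube_D sc d) n = cube_bd sc d (nat (n + 1)) ` V (nat (n + 1))"
  using assms unfolding boundaries_def cube_C_def cube_D_def by simp

lemma
  assumes X: "cube_module sc V d" and "n \<ge> 0"
  shows zero_in_cube_boundaries: "0 \<in> boundaries (cube_C V) (cube_D sc d) n"
    and cube_boundaries_add:
      "\<lbrakk>a \<in> boundaries (cube_C V) (cube_D sc d) n; b \<in> boundaries (cube_C V) (cube_D sc d) n\<rbrakk>
       \<Longrightarrow> a + b \<in> boundaries (cube_C V) (cube_D sc d) n"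
proof -
  interpret vector_space sc by (rule cube_module_vector_space[OF X])
  define m where "m = nat (n + 1)"
  have "m \<ge> 1" using \<open>n \<ge> 0\<close> unfolding m_def by simp
  have "subspace (V m)" by (rule cube_module_subspace[OF X])
  then have zero: "0 \<in> V m" and add: "\<And>x y. x \<in> V m \<Longrightarrow> y \<in> V m \<Longrightarrow> x + y \<in> V m"
    by (auto intro: subspace_0 subspace_add)
  note B = cube_boundaries_eq_image[OF \<open>n \<ge> 0\<close>, folded m_def]
  have "cube_bd sc d m 0 = 0"
    using cube_bd_add[OF X \<open>m \<ge> 1\<close> zero zero] by simp
  then show "0 \<in> boundaries (cube_C V) (cube_D sc d) n"
    unfolding B using zero by (metis image_eqI)
  assume "a \<in> boundaries (cube_C V) (cube_D sc d) n" "b \<in> boundaries (cube_C V) (cube_D sc d) n"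
  then obtain x y where "x \<in> V m" "y \<in> V m" "a = cube_bd sc d m x" "b = cube_bd sc d m y"
    unfolding B by blast
  then show "a + b \<in> boundaries (cube_C V) (cube_D sc d) n"
    unfolding B using cube_bd_add[OF X \<open>m \<ge> 1\<close>] add by (metis image_eqI)
qed

lemma induced_id_coset:
  fixes B :: "'v::ab_group_add set"
  assumes "0 \<in> B" and add: "\<And>a b. a \<in> B \<Longrightarrow> b \<in> B \<Longrightarrow> a + b \<in> B"
  shows "induced id B ((+) w ` B) = (+) w ` B"
proof (intro equalityI subsetI)
  fix t assume "t \<in> induced id B ((+) w ` B)"
  then obtain a b where "a \<in> B" "b \<in> B" "t = w + (a + b)"
    unfolding induced_def by (auto simp: add.assoc)
  then show "t \<in> (+) w ` B" using add by blast
next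
  fix t assume "t \<in> (+) w ` B"
  then have "t \<in> (+) (id t) ` B" using \<open>0 \<in> B\<close> by (metis add.right_neutral id_apply image_eqI)
  with \<open>t \<in> (+) w ` B\<close> show "t \<in> induced id B ((+) w ` B)"
    unfolding induced_def by blast
qed

lemma quotient_iso_refl:
  fixes B :: "'v::ab_group_add set"
  assumes "0 \<in> B" and "\<And>a b. a \<in> B \<Longrightarrow> b \<in> B \<Longrightarrow> a + b \<in> B"
  shows "quotient_iso sc Z B sc Z B"
  unfolding quotient_iso_def
proof (intro exI[of _ id] conjI)
  have "induced id B c = id c" if "c \<in> cosets Z B" for c
    using that induced_id_coset[OF assms] unfolding cosets_def by auto
  then show "bij_betw (induced id B) (cosets Z B) (cosets Z B)"
    using bij_betw_cong bij_betw_id by metis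
qed auto

lemma all_nonneg_int_shift:
  "(\<forall>n::int. n \<ge> 0 \<longrightarrow> P n) \<longleftrightarrow> P 0 \<and> (\<forall>n::int. n \<ge> 0 \<longrightarrow> P (n + 1))"
  by (metis diff_add_cancel linorder_not_le order.order_iff_strict zle_add1_eq_le)

lemma W_cube_iff_W_Delta_vstar:
  "W_cube sc V d sc' V' d' f \<longleftrightarrow>
   W_Delta sc (vstar_sp V) (vstar_face d) sc' (vstar_sp V') (vstar_face d') (vstar_mor f)"
proof -
  let ?H = "\<lambda>n::int. induces_homology_iso (f (nat n)) (cube_C V) (cube_D sc d)
                       (cube_C V') (cube_D sc' d') n"
  have tau: "induces_homology_iso (vstar_mor f n)
               (tau_C sc (vstar_sp V) (vstar_face d)) (tau_D sc (vstar_face d))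
               (tau_C sc' (vstar_sp V') (vstar_face d')) (tau_D sc' (vstar_face d')) n
             \<longleftrightarrow> ?H (n + 1)" if "n \<ge> 0" for n
    unfolding induces_homology_iso_def vstar_mor_def
    by (simp only: cycles_tau_vstar[OF that] boundaries_tau_vstar[OF that])
  have ca: "induces_homology_iso (vstar_mor f (-1))
              (ca_C (vstar_sp V)) (ca_D sc (vstar_face d))
              (ca_C (vstar_sp V')) (ca_D sc' (vstar_face d')) (-1)
            \<longleftrightarrow> ?H 0"
    unfolding induces_homology_iso_def vstar_mor_def
    by (simp add: cycles_ca_vstar boundaries_ca_vstar)
  show ?thesis
    unfolding W_cube_def W_Delta_def all_nonneg_int_shift[of ?H] using tau ca by auto
qed

theorem proposition4p5:
  fixes sc :: "'k::field \<Rightarrow> 'v::ab_group_add \<Rightarrow> 'v"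
    and V :: "nat \<Rightarrow> 'v set"
    and d :: "nat \<Rightarrow> nat \<Rightarrow> bool \<Rightarrow> 'v \<Rightarrow> 'v"
  assumes X: "cube_module sc V d"
  shows "(\<forall>n::int. n \<ge> 0 \<longrightarrow>
            homology_iso sc (tau_C sc (vstar_sp V) (vstar_face d)) (tau_D sc (vstar_face d)) n
                         sc (cube_C V) (cube_D sc d) (n + 1))
       \<and> homology_iso sc (ca_C (vstar_sp V)) (ca_D sc (vstar_face d)) (-1)
                        sc (cube_C V) (cube_D sc d) 0
       \<and> (\<forall>(sc' :: 'k \<Rightarrow> 'w::ab_group_add \<Rightarrow> 'w) V' d' f.
            cube_module sc' V' d' \<and> cube_hom sc V d sc' V' d' f \<longrightarrow>
            (W_cube sc V d sc' V' d' f \<longleftrightarrow>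
             W_Delta sc (vstar_sp V) (vstar_face d) sc' (vstar_sp V') (vstar_face d') (vstar_mor f)))"
proof (intro conjI allI impI)
  have cube_homology_refl:
    "homology_iso sc (cube_C V) (cube_D sc d) n sc (cube_C V) (cube_D sc d) n" if "n \<ge> 0" for n
    unfolding homology_iso_def
    using quotient_iso_refl zero_in_cube_boundaries[OF X that] cube_boundaries_add[OF X that]
    by blast
  show "homology_iso sc (tau_C sc (vstar_sp V) (vstar_face d)) (tau_D sc (vstar_face d)) n
          sc (cube_C V) (cube_D sc d) (n + 1)" if "n \<ge> 0" for n
    using cube_homology_refl[of "n + 1"] that
    unfolding homology_iso_def cycles_tau_vstar[OF that] boundaries_tau_vstar[OF that] by simp
  show "homology_iso sc (ca_C (vstar_sp V)) (ca_D sc (vstar_face d)) (-1)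
          sc (cube_C V) (cube_D sc d) 0"
    using cube_homology_refl[of 0]
    unfolding homology_iso_def cycles_ca_vstar boundaries_ca_vstar by simp
qed (rule W_cube_iff_W_Delta_vstar)

end
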